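(* For every typed DAG task $G=(V,E,\gamma,c)$ and every platform with $M_s\ge 1$ cores of each type $s\in S$, \[ \max_{\pi}\Big(len(\pi)+\sum_{s\in S}\sum_{v\in\mathrm{ivs}(\pi,s)}\frac{c(v)}{M_s}\Big)\;\le\; len(\hat G)+\sum_{s\in S}\frac{vol_s(G)}{M_s}, \] (maximum over paths $\pi$ of $G$), and there exist typed DAG tasks and platforms for which the inequality is strict.
   Context: A typed DAG task is $G=(V,E,\gamma,c)$ where $(V,E)$ is a finite directed acyclic graph with a unique source and a unique sink, $S$ is a finite set of core types, $\gamma:V\to S$ gives the type of each vertex, and $c:V\to\mathbb{R}_{\ge0}$ gives the WCET of each vertex. $vol_s(G)=\sum_{u\in V,\gamma(u)=s}c(u)$; for a path $\pi$, $len(\pi)=\sum_{u\in\pi}c(u)$. The scaled graph $\hat G$ has the same vertices, edges and types as $G$ with weights $\hat c(v)=c(v)(1-1/M_{\gamma(v)})$, and $len(\hat G)$ is its longest path length w.r.t. $\hat c$. $\mathrm{ans}(u)$, $\mathrm{des}(u)$ denote ancestors and descendants of $u$. For $v\in V$, $\mathrm{par}(v)=\{u\in V: u\ne v,\ \gamma(u)=\gamma(v),\ u\notin \mathrm{ans}(v)\cup\mathrm{des}(v)\}$; for a path $\pi=(\tau_1,\dots,\tau_k)$, $\mathrm{ivs}(\pi,s)=\bigcup_{i:\gamma(\tau_i)=s}\mathrm{par}(\tau_i)$. (The left side is the bound NEW-B-2, the right side NEW-B-1; the paper states "NEW-B-2 strictly dominates NEW-B-1".) *)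

theory Defs
  imports Main "HOL.Real"
begin

definition typed_dag :: "'v set \<Rightarrow> ('v \<times> 'v) set \<Rightarrow> 's set \<Rightarrow> ('v \<Rightarrow> 's) \<Rightarrow> ('v \<Rightarrow> real) \<Rightarrow> bool" where
  "typed_dag V E S \<gamma> c \<longleftrightarrow>
     finite V \<and> E \<subseteq> V \<times> V \<and> acyclic E \<and> finite S \<and> \<gamma> ` V \<subseteq> S \<and>
     (\<forall>v\<in>V. c v \<ge> 0) \<and>
     (\<exists>!x. x \<in> V \<and> (\<forall>u. (u, x) \<notin> E)) \<and>
     (\<exists>!x. x \<in> V \<and> (\<forall>u. (x, u) \<notin> E))"

definition is_path :: "'v set \<Rightarrow> ('v \<times> 'v) set \<Rightarrow> 'v list \<Rightarrow> bool" where
  "is_path V E \<pi> \<longleftrightarrow> \<pi> \<noteq> [] \<and> set \<pi> \<subseteq> V \<and>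
     (\<forall>i. Suc i < length \<pi> \<longrightarrow> (\<pi> ! i, \<pi> ! Suc i) \<in> E)"

definition len :: "('v \<Rightarrow> real) \<Rightarrow> 'v list \<Rightarrow> real" where
  "len w \<pi> = (\<Sum>i<length \<pi>. w (\<pi> ! i))"

definition vol :: "'v set \<Rightarrow> ('v \<Rightarrow> 's) \<Rightarrow> ('v \<Rightarrow> real) \<Rightarrow> 's \<Rightarrow> real" where
  "vol V \<gamma> c s = (\<Sum>u\<in>{u\<in>V. \<gamma> u = s}. c u)"

definition ans :: "('v \<times> 'v) set \<Rightarrow> 'v \<Rightarrow> 'v set" where
  "ans E u = {w. (w, u) \<in> E\<^sup>+}"

definition des :: "('v \<times> 'v) set \<Rightarrow> 'v \<Rightarrow> 'v set" where
  "des E u = {w. (u, w) \<in> E\<^sup>+}"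

definition par :: "'v set \<Rightarrow> ('v \<times> 'v) set \<Rightarrow> ('v \<Rightarrow> 's) \<Rightarrow> 'v \<Rightarrow> 'v set" where
  "par V E \<gamma> v = {u\<in>V. u \<noteq> v \<and> \<gamma> u = \<gamma> v \<and> u \<notin> ans E v \<union> des E v}"

definition ivs :: "'v set \<Rightarrow> ('v \<times> 'v) set \<Rightarrow> ('v \<Rightarrow> 's) \<Rightarrow> 'v list \<Rightarrow> 's \<Rightarrow> 'v set" where
  "ivs V E \<gamma> \<pi> s = (\<Union>i\<in>{i. i < length \<pi> \<and> \<gamma> (\<pi> ! i) = s}. par V E \<gamma> (\<pi> ! i))"

text \<open>Scaled weights of G-hat.\<close>
definition chat :: "('v \<Rightarrow> 's) \<Rightarrow> ('v \<Rightarrow> real) \<Rightarrow> ('s \<Rightarrow> nat) \<Rightarrow> 'v \<Rightarrow> real" where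
  "chat \<gamma> c M v = c v * (1 - 1 / real (M (\<gamma> v)))"

definition len_hat :: "'v set \<Rightarrow> ('v \<times> 'v) set \<Rightarrow> ('v \<Rightarrow> 's) \<Rightarrow> ('v \<Rightarrow> real) \<Rightarrow> ('s \<Rightarrow> nat) \<Rightarrow> real" where
  "len_hat V E \<gamma> c M = Max {len (chat \<gamma> c M) \<pi> | \<pi>. is_path V E \<pi>}"

definition new_b2 :: "'v set \<Rightarrow> ('v \<times> 'v) set \<Rightarrow> 's set \<Rightarrow> ('v \<Rightarrow> 's) \<Rightarrow> ('v \<Rightarrow> real) \<Rightarrow> ('s \<Rightarrow> nat) \<Rightarrow> real" where
  "new_b2 V E S \<gamma> c M = Max {len c \<pi> + (\<Sum>s\<in>S. \<Sum>v\<in>ivs V E \<gamma> \<pi> s. c v / real (M s)) | \<pi>. is_path V E \<pi>}"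

definition new_b1 :: "'v set \<Rightarrow> ('v \<times> 'v) set \<Rightarrow> 's set \<Rightarrow> ('v \<Rightarrow> 's) \<Rightarrow> ('v \<Rightarrow> real) \<Rightarrow> ('s \<Rightarrow> nat) \<Rightarrow> real" where
  "new_b1 V E S \<gamma> c M = len_hat V E \<gamma> c M + (\<Sum>s\<in>S. vol V \<gamma> c s / real (M s))"

end

theory Submission
  imports Defs
begin

text \<open>
  Split each weight as \<open>c v = chat v + c v / M (\<gamma> v)\<close>. Along a path \<open>\<pi>\<close> the first parts add up to
  at most \<open>len(G-hat)\<close>. Any two vertices of \<open>\<pi>\<close> are comparable, whereas every vertex of
  \<open>ivs(\<pi>, s)\<close> is incomparable to some vertex of \<open>\<pi>\<close>; hence the type-\<open>s\<close> vertices of \<open>\<pi>\<close> and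
  \<open>ivs(\<pi>, s)\<close> are disjoint sets of type-\<open>s\<close> vertices, of total weight at most \<open>vol\<^sub>s(G)\<close>.
  Dividing by \<open>M\<^sub>s\<close> and summing over the types bounds every path term of NEW-B-2 by NEW-B-1.
  The bound is strict on a diamond whose two middle vertices have different types: NEW-B-1
  charges both of them, while no path meets both and neither lies in the other's \<open>par\<close>.
\<close>

definition new_b2_term :: "'v set \<Rightarrow> ('v \<times> 'v) set \<Rightarrow> 's set \<Rightarrow> ('v \<Rightarrow> 's) \<Rightarrow> ('v \<Rightarrow> real) \<Rightarrow>
    ('s \<Rightarrow> nat) \<Rightarrow> 'v list \<Rightarrow> real" where
  "new_b2_term V E S \<gamma> c M \<pi> = len c \<pi> + (\<Sum>s\<in>S. \<Sum>v\<in>ivs V E \<gamma> \<pi> s. c v / real (M s))"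

lemma is_path_nth_trancl:
  assumes "is_path V E \<pi>" and "i < j" and "j < length \<pi>"
  shows "(\<pi> ! i, \<pi> ! j) \<in> E\<^sup>+"
  using assms(2,3)
proof (induction j)
  case 0
  then show ?case by simp
next
  case (Suc j)
  have edge: "(\<pi> ! j, \<pi> ! Suc j) \<in> E"
    using assms(1) Suc.prems unfolding is_path_def by blast
  show ?case
  proof (cases "i = j")
    case True
    then show ?thesis using edge by auto
  next
    case False
    with Suc have "(\<pi> ! i, \<pi> ! j) \<in> E\<^sup>+" by simp
    then show ?thesis using edge by (rule trancl_into_trancl)
  qed
qed

lemma is_path_comparable:
  assumes "is_path V E \<pi>" and "u \<in> set \<pi>" and "v \<in> set \<pi>"
  shows "u = v \<or> (u, v) \<in> E\<^sup>+ \<or> (v, u) \<in> E\<^sup>+"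
proof -
  obtain i j where "i < length \<pi>" "j < length \<pi>" "u = \<pi> ! i" "v = \<pi> ! j"
    using assms(2,3) by (auto simp: in_set_conv_nth)
  then show ?thesis
    using is_path_nth_trancl[OF assms(1)] by (metis linorder_neqE_nat)
qed

lemma is_path_distinct:
  assumes "is_path V E \<pi>" and "acyclic E"
  shows "distinct \<pi>"
  unfolding distinct_conv_nth
proof (intro allI impI)
  fix i j
  assume "i < length \<pi>" "j < length \<pi>" "i \<noteq> j"
  then have "(\<pi> ! i, \<pi> ! j) \<in> E\<^sup>+ \<or> (\<pi> ! j, \<pi> ! i) \<in> E\<^sup>+"
    using is_path_nth_trancl[OF assms(1)] by (metis linorder_neqE_nat)
  then show "\<pi> ! i \<noteq> \<pi> ! j"
    using assms(2) unfolding acyclic_def by auto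
qed

lemma finite_paths:
  assumes "finite V" and "acyclic E"
  shows "finite {\<pi>. is_path V E \<pi>}"
proof (rule finite_subset[OF _ finite_lists_length_le[OF assms(1), of "card V"]])
  show "{\<pi>. is_path V E \<pi>} \<subseteq> {xs. set xs \<subseteq> V \<and> length xs \<le> card V}"
  proof
    fix \<pi> assume "\<pi> \<in> {\<pi>. is_path V E \<pi>}"
    then have path: "is_path V E \<pi>" by simp
    then have sub: "set \<pi> \<subseteq> V" unfolding is_path_def by simp
    have "length \<pi> = card (set \<pi>)"
      using is_path_distinct[OF path assms(2)] by (simp add: distinct_card)
    also have "\<dots> \<le> card V" using card_mono[OF assms(1) sub] .
    finally show "\<pi> \<in> {xs. set xs \<subseteq> V \<and> length xs \<le> card V}" using sub by simp
  qed
qed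

lemma typed_dag_ex_path:
  assumes "typed_dag V E S \<gamma> c"
  shows "\<exists>\<pi>. is_path V E \<pi>"
proof -
  obtain x where "x \<in> V" using assms unfolding typed_dag_def by blast
  then have "is_path V E [x]" unfolding is_path_def by simp
  then show ?thesis by blast
qed

lemma new_b2_le_iff:
  assumes "typed_dag V E S \<gamma> c"
  shows "new_b2 V E S \<gamma> c M \<le> B \<longleftrightarrow> (\<forall>\<pi>. is_path V E \<pi> \<longrightarrow> new_b2_term V E S \<gamma> c M \<pi> \<le> B)"
proof -
  have "finite V" and "acyclic E"
    using assms unfolding typed_dag_def by auto
  then have "finite {\<pi>. is_path V E \<pi>}"
    by (rule finite_paths)
  then show ?thesis
    unfolding new_b2_def new_b2_term_def[symmetric] using typed_dag_ex_path[OF assms]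
    by (subst Max_le_iff) auto
qed

lemma len_le_len_hat:
  assumes "finite V" and "acyclic E" and "is_path V E \<pi>"
  shows "len (chat \<gamma> c M) \<pi> \<le> len_hat V E \<gamma> c M"
  unfolding len_hat_def using assms finite_paths[OF assms(1,2)] by (intro Max_ge) auto

lemma len_distinct:
  assumes "distinct \<pi>"
  shows "len w \<pi> = (\<Sum>x\<in>set \<pi>. w x)"
proof -
  have "set \<pi> = (\<lambda>i. \<pi> ! i) ` {..<length \<pi>}" by (auto simp: set_conv_nth)
  moreover have "inj_on (\<lambda>i. \<pi> ! i) {..<length \<pi>}"
    using assms by (simp add: inj_on_def nth_eq_iff_index_eq)
  ultimately show ?thesis unfolding len_def by (simp add: sum.reindex)
qed

lemma len_chat_plus_len:
  "len (chat \<gamma> c M) \<pi> + len (\<lambda>v. c v / real (M (\<gamma> v))) \<pi> = len c \<pi>"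
  unfolding len_def chat_def sum.distrib[symmetric]
  by (rule sum.cong) (auto simp: algebra_simps diff_divide_distrib)

lemma sum_divide_by_type:
  assumes "finite A" and "finite S" and "\<gamma> ` A \<subseteq> S"
  shows "(\<Sum>x\<in>A. f x / real (M (\<gamma> x))) = (\<Sum>s\<in>S. (\<Sum>x\<in>{x\<in>A. \<gamma> x = s}. f x) / real (M s))"
proof -
  have "(\<Sum>x\<in>A. f x / real (M (\<gamma> x))) = (\<Sum>s\<in>S. \<Sum>x\<in>{x\<in>A. \<gamma> x = s}. f x / real (M (\<gamma> x)))"
    using sum.group[OF assms, of "\<lambda>x. f x / real (M (\<gamma> x))"] by simp
  also have "\<dots> = (\<Sum>s\<in>S. (\<Sum>x\<in>{x\<in>A. \<gamma> x = s}. f x) / real (M s))"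
    by (intro sum.cong) (auto simp: sum_divide_distrib)
  finally show ?thesis .
qed

lemma ivs_subset_type:
  "ivs V E \<gamma> \<pi> s \<subseteq> {u\<in>V. \<gamma> u = s}"
  unfolding ivs_def par_def by auto

lemma set_path_disjoint_ivs:
  assumes "is_path V E \<pi>"
  shows "set \<pi> \<inter> ivs V E \<gamma> \<pi> s = {}"
proof (rule ccontr)
  assume "set \<pi> \<inter> ivs V E \<gamma> \<pi> s \<noteq> {}"
  then obtain v i where "v \<in> set \<pi>" "i < length \<pi>" "v \<in> par V E \<gamma> (\<pi> ! i)"
    unfolding ivs_def by auto
  moreover have "\<pi> ! i \<in> set \<pi>" using \<open>i < length \<pi>\<close> by simp
  ultimately show False
    using is_path_comparable[OF assms] unfolding par_def ans_def des_def by blast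
qed

lemma sum_path_type_plus_ivs_le_vol:
  assumes "finite V" and "\<forall>v\<in>V. c v \<ge> 0" and "is_path V E \<pi>"
  shows "(\<Sum>x\<in>{x\<in>set \<pi>. \<gamma> x = s}. c x) + (\<Sum>v\<in>ivs V E \<gamma> \<pi> s. c v) \<le> vol V \<gamma> c s"
proof -
  have path_in_V: "set \<pi> \<subseteq> V" using assms(3) unfolding is_path_def by simp
  have "finite {u\<in>V. \<gamma> u = s}" using assms(1) by auto
  then have "finite (ivs V E \<gamma> \<pi> s)" by (rule finite_subset[OF ivs_subset_type])
  moreover have "{x\<in>set \<pi>. \<gamma> x = s} \<inter> ivs V E \<gamma> \<pi> s = {}"
    using set_path_disjoint_ivs[OF assms(3), of \<gamma> s] by auto
  ultimately have "(\<Sum>x\<in>{x\<in>set \<pi>. \<gamma> x = s}. c x) + (\<Sum>v\<in>ivs V E \<gamma> \<pi> s. c v)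
      = (\<Sum>x\<in>{x\<in>set \<pi>. \<gamma> x = s} \<union> ivs V E \<gamma> \<pi> s. c x)"
    by (intro sum.union_disjoint[symmetric]) auto
  also have "\<dots> \<le> (\<Sum>x\<in>{u\<in>V. \<gamma> u = s}. c x)"
    using ivs_subset_type[of V E \<gamma> \<pi> s] path_in_V assms(1,2) by (intro sum_mono2) auto
  finally show ?thesis unfolding vol_def .
qed

lemma new_b2_term_le_new_b1:
  assumes dag: "typed_dag V E S \<gamma> c" and path: "is_path V E \<pi>"
  shows "new_b2_term V E S \<gamma> c M \<pi> \<le> new_b1 V E S \<gamma> c M"
proof -
  have fin: "finite V" "finite S" and "acyclic E" and types: "\<gamma> ` V \<subseteq> S"
    and nonneg: "\<forall>v\<in>V. c v \<ge> 0"
    using dag unfolding typed_dag_def by auto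
  have "\<gamma> ` set \<pi> \<subseteq> S" using types path unfolding is_path_def by blast
  have "len (\<lambda>v. c v / real (M (\<gamma> v))) \<pi> = (\<Sum>x\<in>set \<pi>. c x / real (M (\<gamma> x)))"
    using len_distinct[OF is_path_distinct[OF path \<open>acyclic E\<close>]] .
  also have "\<dots> = (\<Sum>s\<in>S. (\<Sum>x\<in>{x\<in>set \<pi>. \<gamma> x = s}. c x) / real (M s))"
    using fin(2) \<open>\<gamma> ` set \<pi> \<subseteq> S\<close> by (intro sum_divide_by_type) auto
  finally have cores_part: "len (\<lambda>v. c v / real (M (\<gamma> v))) \<pi>
      = (\<Sum>s\<in>S. (\<Sum>x\<in>{x\<in>set \<pi>. \<gamma> x = s}. c x) / real (M s))" .
  have "new_b2_term V E S \<gamma> c M \<pi> = len (chat \<gamma> c M) \<pi> +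
      (\<Sum>s\<in>S. ((\<Sum>x\<in>{x\<in>set \<pi>. \<gamma> x = s}. c x) + (\<Sum>v\<in>ivs V E \<gamma> \<pi> s. c v)) / real (M s))"
    unfolding new_b2_term_def cores_part
      len_chat_plus_len[where \<gamma>=\<gamma> and c=c and M=M and \<pi>=\<pi>, symmetric]
    by (simp add: sum.distrib add_divide_distrib sum_divide_distrib)
  also have "\<dots> \<le> len_hat V E \<gamma> c M + (\<Sum>s\<in>S. vol V \<gamma> c s / real (M s))"
    using len_le_len_hat[OF fin(1) \<open>acyclic E\<close> path]
      sum_path_type_plus_ivs_le_vol[OF fin(1) nonneg path]
    by (intro add_mono sum_mono divide_right_mono) auto
  finally show ?thesis unfolding new_b1_def .
qed

lemma new_b2_le_new_b1:
  assumes "typed_dag V E S \<gamma> c"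
  shows "new_b2 V E S \<gamma> c M \<le> new_b1 V E S \<gamma> c M"
  using new_b2_term_le_new_b1[OF assms] new_b2_le_iff[OF assms] by blast

definition diamond_V :: "nat set" where
  "diamond_V = {0, 1, 2, 3}"

definition diamond_E :: "(nat \<times> nat) set" where
  "diamond_E = {(0, 1), (0, 2), (1, 3), (2, 3)}"

definition diamond_S :: "nat set" where
  "diamond_S = {0, 1}"

definition diamond_type :: "nat \<Rightarrow> nat" where
  "diamond_type v = (if v = 2 then 1 else 0)"

definition diamond_wcet :: "nat \<Rightarrow> real" where
  "diamond_wcet v = (if v = 1 \<or> v = 2 then 1 else 0)"

abbreviation diamond_cores :: "nat \<Rightarrow> nat" where
  "diamond_cores \<equiv> \<lambda>_. 1"

lemma diamond_trancl: "diamond_E\<^sup>+ = {(0, 1), (0, 2), (0, 3), (1, 3), (2, 3)}"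
proof
  show "diamond_E\<^sup>+ \<subseteq> {(0, 1), (0, 2), (0, 3), (1, 3), (2, 3)}"
  proof (rule subrelI)
    fix a b assume "(a, b) \<in> diamond_E\<^sup>+"
    then show "(a, b) \<in> {(0, 1), (0, 2), (0, 3), (1, 3), (2, 3)}"
      by (induction rule: trancl_induct) (auto simp: diamond_E_def)
  qed
  have "(0, 1) \<in> diamond_E\<^sup>+" "(1, 3) \<in> diamond_E\<^sup>+"
    by (auto simp: diamond_E_def)
  then have "(0, 3) \<in> diamond_E\<^sup>+" by (rule trancl_trans)
  then show "{(0, 1), (0, 2), (0, 3), (1, 3), (2, 3)} \<subseteq> diamond_E\<^sup>+"
    by (auto simp: diamond_E_def)
qed

lemma typed_dag_diamond: "typed_dag diamond_V diamond_E diamond_S diamond_type diamond_wcet"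
proof -
  have "acyclic diamond_E" unfolding acyclic_def diamond_trancl by auto
  moreover have "\<exists>!x. x \<in> diamond_V \<and> (\<forall>u. (u, x) \<notin> diamond_E)"
    by (intro ex1I[of _ 0]) (auto simp: diamond_V_def diamond_E_def)
  moreover have "\<exists>!x. x \<in> diamond_V \<and> (\<forall>u. (x, u) \<notin> diamond_E)"
    by (intro ex1I[of _ 3]) (auto simp: diamond_V_def diamond_E_def)
  ultimately show ?thesis
    unfolding typed_dag_def
    by (auto simp: diamond_V_def diamond_E_def diamond_S_def diamond_type_def diamond_wcet_def)
qed

lemma new_b1_diamond: "new_b1 diamond_V diamond_E diamond_S diamond_type diamond_wcet diamond_cores = 2"
proof -
  have "chat diamond_type diamond_wcet diamond_cores = (\<lambda>_. 0)"
    by (auto simp: chat_def)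
  then have "{len (chat diamond_type diamond_wcet diamond_cores) \<pi> | \<pi>. is_path diamond_V diamond_E \<pi>} = {0}"
    using typed_dag_ex_path[OF typed_dag_diamond] by (auto simp: len_def)
  then have "len_hat diamond_V diamond_E diamond_type diamond_wcet diamond_cores = 0"
    unfolding len_hat_def by simp
  moreover have "{u \<in> diamond_V. diamond_type u = 0} = {0, 1, 3}"
    and "{u \<in> diamond_V. diamond_type u = 1} = {2}"
    by (auto simp: diamond_V_def diamond_type_def)
  ultimately show ?thesis
    unfolding new_b1_def vol_def by (simp add: diamond_S_def diamond_wcet_def)
qed

lemma new_b2_term_diamond_le:
  assumes path: "is_path diamond_V diamond_E \<pi>"
  shows "new_b2_term diamond_V diamond_E diamond_S diamond_type diamond_wcet diamond_cores \<pi> \<le> 1"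
proof -
  have path_in_V: "set \<pi> \<subseteq> diamond_V" using path unfolding is_path_def by simp
  have "par diamond_V diamond_E diamond_type v = {}" if "v \<in> diamond_V" for v
    using that
    by (auto simp: par_def ans_def des_def diamond_trancl diamond_V_def diamond_type_def)
  then have no_ivs: "ivs diamond_V diamond_E diamond_type \<pi> s = {}" for s
    unfolding ivs_def using path_in_V nth_mem by fastforce
  have "\<not> (1 \<in> set \<pi> \<and> 2 \<in> set \<pi>)"
    using is_path_comparable[OF path, of 1 2] by (auto simp: diamond_trancl)
  then have "set \<pi> \<subseteq> {0, 1, 3} \<or> set \<pi> \<subseteq> {0, 2, 3}"
    using path_in_V by (auto simp: diamond_V_def)
  then have "(\<Sum>x\<in>set \<pi>. diamond_wcet x) \<le> 1"
  proof
    assume "set \<pi> \<subseteq> {0, 1, 3}"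
    then have "(\<Sum>x\<in>set \<pi>. diamond_wcet x) \<le> (\<Sum>x\<in>{0, 1, 3}. diamond_wcet x)"
      by (intro sum_mono2) (auto simp: diamond_wcet_def)
    then show ?thesis by (simp add: diamond_wcet_def)
  next
    assume "set \<pi> \<subseteq> {0, 2, 3}"
    then have "(\<Sum>x\<in>set \<pi>. diamond_wcet x) \<le> (\<Sum>x\<in>{0, 2, 3}. diamond_wcet x)"
      by (intro sum_mono2) (auto simp: diamond_wcet_def)
    then show ?thesis by (simp add: diamond_wcet_def)
  qed
  moreover have "acyclic diamond_E" using typed_dag_diamond unfolding typed_dag_def by simp
  ultimately show ?thesis
    unfolding new_b2_term_def no_ivs using len_distinct[OF is_path_distinct[OF path]] by simp
qed

theorem corollary3:
  shows "(\<forall>(V :: 'v set) E (S :: 's set) \<gamma> c M.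
            typed_dag V E S \<gamma> c \<and> (\<forall>s\<in>S. M s \<ge> 1) \<longrightarrow>
            new_b2 V E S \<gamma> c M \<le> new_b1 V E S \<gamma> c M)
       \<and> (\<exists>(V :: nat set) E (S :: nat set) \<gamma> c M.
            typed_dag V E S \<gamma> c \<and> (\<forall>s\<in>S. M s \<ge> 1) \<and>
            new_b2 V E S \<gamma> c M < new_b1 V E S \<gamma> c M)"
proof
  show "\<forall>(V :: 'v set) E (S :: 's set) \<gamma> c M.
      typed_dag V E S \<gamma> c \<and> (\<forall>s\<in>S. M s \<ge> 1) \<longrightarrow> new_b2 V E S \<gamma> c M \<le> new_b1 V E S \<gamma> c M"
    using new_b2_le_new_b1 by blast
  have "new_b2 diamond_V diamond_E diamond_S diamond_type diamond_wcet diamond_cores \<le> 1"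
    using new_b2_term_diamond_le new_b2_le_iff[OF typed_dag_diamond] by blast
  then have "new_b2 diamond_V diamond_E diamond_S diamond_type diamond_wcet diamond_cores
      < new_b1 diamond_V diamond_E diamond_S diamond_type diamond_wcet diamond_cores"
    unfolding new_b1_diamond by simp
  then show "\<exists>(V :: nat set) E (S :: nat set) \<gamma> c M.
      typed_dag V E S \<gamma> c \<and> (\<forall>s\<in>S. M s \<ge> 1) \<and> new_b2 V E S \<gamma> c M < new_b1 V E S \<gamma> c M"
    using typed_dag_diamond by fastforce
qed

end
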